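(* Let $\rho>0$, $c>0$, $l>0$, $h_0>0$, $k_0>0$, $\beta>0$, $T_f\in\mathbb{R}$ and $T_\infty<T_f$ be constants, and let $k(T)=k_0\left(1+\beta\frac{T-T_\infty}{T_f-T_\infty}\right)$. Put $\alpha_0=\frac{k_0}{\rho c}$, $\mathrm{Ste}_\infty=\frac{c(T_f-T_\infty)}{l}$, $\mathrm{Bi}=\frac{h_0\sqrt{\alpha_0}}{k_0}$ and $\gamma=2\,\mathrm{Bi}$. Consider the Stefan problem of finding $T(x,t)$ and $s(t)$ such that \begin{align*} &\rho c\, T_t(x,t)=(k(T(x,t))T_x(x,t))_x, && 0<x<s(t),\ t>0,\\ &s(0)=0,&&\\ &T(s(t),t)=T_f, && t>0,\\ &k(T_f)T_x(s(t),t)=\rho l\,\dot s(t), && t>0,\\ &k(T(0,t))T_x(0,t)=\frac{h_0}{\sqrt t}\,(T(0,t)-T_\infty), && t>0. \end{align*} Then this problem has the solution $$T(x,t)=(T_f-T_\infty)\,\varphi\!\left(\frac{x}{2\sqrt{\alpha_0 t}}\right)+T_\infty\quad(0<x<s(t),\ t>0),\qquad s(t)=2\lambda\sqrt{\alpha_0 t}\quad(t>0),$$ with a function $\varphi$ and a parameter $\lambda>0$, if and only if $\varphi$ and $\lambda$ satisfy \begin{align*} &[(1+\beta y(\eta))y'(\eta)]'+2\eta y'(\eta)=0, && 0<\eta<\lambda,\\ &y'(0)+\beta y(0)y'(0)-\gamma y(0)=0,&&\\ &y(\lambda)=1,&& \end{align*} (with $y=\varphi$) together with the condition $$\frac{\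varphi'(\lambda)}{\lambda}=\frac{2}{(1+\beta)\,\mathrm{Ste}_\infty}.$$
   Context: $T$ is the temperature of the solid region $0<x<s(t)$ and $s$ is the free boundary; $\mathrm{Ste}_\infty$ is the Stefan number and $\mathrm{Bi}$ the generalized Biot number. *)

theory Defs
  imports "HOL-Analysis.Analysis"
begin

definition kcond :: "real \<Rightarrow> real \<Rightarrow> real \<Rightarrow> real \<Rightarrow> real \<Rightarrow> real" where
  "kcond k0 \<beta> Tf Tinf T = k0 * (1 + \<beta> * (T - Tinf) / (Tf - Tinf))"

definition alpha0 :: "real \<Rightarrow> real \<Rightarrow> real \<Rightarrow> real" where
  "alpha0 k0 \<rho> c = k0 / (\<rho> * c)"

definition Ste_inf :: "real \<Rightarrow> real \<Rightarrow> real \<Rightarrow> real \<Rightarrow> real" where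
  "Ste_inf c Tf Tinf l = c * (Tf - Tinf) / l"

definition Biot :: "real \<Rightarrow> real \<Rightarrow> real \<Rightarrow> real \<Rightarrow> real" where
  "Biot h0 k0 \<rho> c = h0 * sqrt (alpha0 k0 \<rho> c) / k0"

definition Tx :: "(real \<Rightarrow> real \<Rightarrow> real) \<Rightarrow> (real \<Rightarrow> real) \<Rightarrow> real \<Rightarrow> real \<Rightarrow> real" where
  "Tx T s x t = vector_derivative (\<lambda>\<xi>. T \<xi> t) (at x within {0..s t})"

definition stefan_solution ::
  "real \<Rightarrow> real \<Rightarrow> real \<Rightarrow> real \<Rightarrow> (real \<Rightarrow> real) \<Rightarrow> real \<Rightarrow> real \<Rightarrow>
   (real \<Rightarrow> real \<Rightarrow> real) \<Rightarrow> (real \<Rightarrow> real) \<Rightarrow> bool" where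
  "stefan_solution \<rho> c l h0 k Tf Tinf T s \<longleftrightarrow>
     s 0 = 0 \<and>
     (\<forall>t>0. s differentiable (at t)) \<and>
     (\<forall>t>0. \<forall>x\<in>{0..s t}. (\<lambda>\<xi>. T \<xi> t) differentiable (at x within {0..s t})) \<and>
     (\<forall>t>0. \<forall>x\<in>{0<..<s t}.
        (\<lambda>\<tau>. T x \<tau>) differentiable (at t) \<and>
        ((\<lambda>\<xi>. k (T \<xi> t) * Tx T s \<xi> t) has_real_derivative
            \<rho> * c * deriv (\<lambda>\<tau>. T x \<tau>) t) (at x)) \<and>
     (\<forall>t>0. T (s t) t = Tf) \<and>
     (\<forall>t>0. k Tf * Tx T s (s t) t = \<rho> * l * deriv s t) \<and>
     (\<forall>t>0. k (T 0 t) * Tx T s 0 t = h0 / sqrt t * (T 0 t - Tinf))"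

definition dy :: "(real \<Rightarrow> real) \<Rightarrow> real \<Rightarrow> real \<Rightarrow> real" where
  "dy y lam \<eta> = vector_derivative y (at \<eta> within {0..lam})"

definition ode_problem :: "real \<Rightarrow> real \<Rightarrow> (real \<Rightarrow> real) \<Rightarrow> real \<Rightarrow> bool" where
  "ode_problem \<beta> \<gamma> y lam \<longleftrightarrow>
     (\<forall>\<eta>\<in>{0..lam}. y differentiable (at \<eta> within {0..lam})) \<and>
     (\<forall>\<eta>\<in>{0<..<lam}.
        ((\<lambda>z. (1 + \<beta> * y z) * dy y lam z) has_real_derivative
            - 2 * \<eta> * dy y lam \<eta>) (at \<eta>)) \<and>
     dy y lam 0 + \<beta> * y 0 * dy y lam 0 - \<gamma> * y 0 = 0 \<and>
     y lam = 1"

end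

theory Submission
  imports Defs
begin

text \<open>In the similarity variable \<open>\<eta> = x / W t\<close> with \<open>W t = 2 \<surd>(\<alpha>\<^sub>0 t)\<close>, the ansatz
  \<open>T = (T\<^sub>f - T\<^sub>\<infinity>) \<phi>(\<eta>) + T\<^sub>\<infinity>\<close> has \<open>k(T) = k\<^sub>0 (1 + \<beta> \<phi>)\<close>, \<open>T\<^sub>x = (T\<^sub>f - T\<^sub>\<infinity>) \<phi>'/W t\<close> and
  \<open>T\<^sub>t = -(T\<^sub>f - T\<^sub>\<infinity>) \<phi>' \<eta> / (2t)\<close>. Since \<open>(W t)\<^sup>2 = 4 \<alpha>\<^sub>0 t\<close> and \<open>\<alpha>\<^sub>0 \<rho> c = k\<^sub>0\<close>, at every fixed
  \<open>t > 0\<close> each condition of the Stefan problem is equivalent to the corresponding condition on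
  \<open>\<phi>\<close> with all dependence on \<open>t\<close> cancelling, so requiring it for all \<open>t > 0\<close> is the same as
  requiring it for one.\<close>

lemma has_real_derivative_rescale_Icc:
  fixes g :: "real \<Rightarrow> real"
  assumes "c > 0" and "(g has_real_derivative d) (at (c * x) within {0..c * L})"
  shows "((\<lambda>z. g (c * z)) has_real_derivative c * d) (at x within {0..L})"
proof -
  have "(\<lambda>z. c * z) ` {0..L} = {0..c * L}"
    using assms(1) image_mult_atLeastAtMost[of c 0 L] by simp
  moreover have "((\<lambda>z. c * z) has_vector_derivative c) (at x within {0..L})"
    using DERIV_cmult_Id has_real_derivative_iff_has_vector_derivative by blast
  ultimately show ?thesis
    using vector_diff_chain_within[of "\<lambda>z. c * z" c x "{0..L}" g d] assms(2)
    by (simp add: o_def has_real_derivative_iff_has_vector_derivative)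
qed

lemma has_real_derivative_affine_rescale_Icc_iff:
  fixes \<phi> :: "real \<Rightarrow> real"
  assumes W: "W > 0" and A: "A \<noteq> 0"
  shows "((\<lambda>z. A * \<phi> (z / W) + B) has_real_derivative d) (at \<xi> within {0..lam * W})
     \<longleftrightarrow> (\<phi> has_real_derivative d * W / A) (at (\<xi> / W) within {0..lam})"
proof
  assume "((\<lambda>z. A * \<phi> (z / W) + B) has_real_derivative d) (at \<xi> within {0..lam * W})"
  then have "((\<lambda>z. A * \<phi> (z / W) + B) has_real_derivative d) (at (W * (\<xi> / W)) within {0..W * lam})"
    using W by (simp add: mult.commute)
  from has_real_derivative_rescale_Icc[OF W this]
  have "((\<lambda>z. 1 / A * (A * \<phi> (W * z / W) + B) + - B / A) has_real_derivative 1 / A * (W * d) + 0)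
      (at (\<xi> / W) within {0..lam})"
    by (rule DERIV_add[OF DERIV_cmult DERIV_const])
  moreover have "(\<lambda>z. 1 / A * (A * \<phi> (W * z / W) + B) + - B / A) = \<phi>"
    using W A by (auto simp: field_simps)
  ultimately show "(\<phi> has_real_derivative d * W / A) (at (\<xi> / W) within {0..lam})"
    by (simp add: mult.commute)
next
  assume "(\<phi> has_real_derivative d * W / A) (at (\<xi> / W) within {0..lam})"
  then have "(\<phi> has_real_derivative d * W / A) (at ((1 / W) * \<xi>) within {0..(1 / W) * (lam * W)})"
    using W by simp
  from has_real_derivative_rescale_Icc[OF _ this] W
  have "((\<lambda>z. \<phi> (z / W)) has_real_derivative d / A) (at \<xi> within {0..lam * W})"
    by simp
  then show "((\<lambda>z. A * \<phi> (z / W) + B) has_real_derivative d) (at \<xi> within {0..lam * W})"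
    using A by (auto intro!: derivative_eq_intros)
qed

lemma differentiable_affine_rescale_Icc_iff:
  fixes \<phi> :: "real \<Rightarrow> real"
  assumes "W > 0" and "A \<noteq> 0"
  shows "(\<lambda>z. A * \<phi> (z / W) + B) differentiable (at \<xi> within {0..lam * W})
     \<longleftrightarrow> \<phi> differentiable (at (\<xi> / W) within {0..lam})"
proof -
  have "(\<exists>d. (\<phi> has_real_derivative d * W / A) (at (\<xi> / W) within {0..lam}))
      \<longleftrightarrow> (\<exists>p. (\<phi> has_real_derivative p) (at (\<xi> / W) within {0..lam}))"
  proof
    assume "\<exists>p. (\<phi> has_real_derivative p) (at (\<xi> / W) within {0..lam})"
    then obtain p where "(\<phi> has_real_derivative p) (at (\<xi> / W) within {0..lam})" ..
    moreover have "p * A / W * W / A = p" using assms by simp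
    ultimately show "\<exists>d. (\<phi> has_real_derivative d * W / A) (at (\<xi> / W) within {0..lam})"
      by metis
  qed blast
  then show ?thesis
    unfolding real_differentiable_def has_real_derivative_affine_rescale_Icc_iff[OF assms] .
qed

lemma vector_derivative_affine_rescale_Icc:
  fixes \<phi> :: "real \<Rightarrow> real"
  assumes W: "W > 0" and A: "A \<noteq> 0" and lam: "lam > 0" and \<xi>: "\<xi> \<in> {0..lam * W}"
    and diff: "\<phi> differentiable (at (\<xi> / W) within {0..lam})"
  shows "vector_derivative (\<lambda>z. A * \<phi> (z / W) + B) (at \<xi> within {0..lam * W})
       = A / W * vector_derivative \<phi> (at (\<xi> / W) within {0..lam})"
proof -
  let ?p = "vector_derivative \<phi> (at (\<xi> / W) within {0..lam})"
  have "(\<phi> has_real_derivative (A / W * ?p) * W / A) (at (\<xi> / W) within {0..lam})"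
    using diff W A vector_derivative_works has_real_derivative_iff_has_vector_derivative by fastforce
  then have "((\<lambda>z. A * \<phi> (z / W) + B) has_vector_derivative A / W * ?p) (at \<xi> within {0..lam * W})"
    using has_real_derivative_affine_rescale_Icc_iff[OF W A] has_real_derivative_iff_has_vector_derivative
    by blast
  moreover have "at \<xi> within {0..lam * W} \<noteq> bot"
    using W lam \<xi> by (simp add: trivial_limit_within)
  ultimately show ?thesis by (simp add: vector_derivative_within)
qed

lemma has_real_derivative_similarity_variable:
  assumes "a > 0" and "t > 0"
  shows "((\<lambda>\<tau>. x / (2 * sqrt (a * \<tau>))) has_real_derivative - (x / (2 * sqrt (a * t))) / (2 * t)) (at t)"
proof -
  have "a * t > 0" using assms by simp
  then have "((\<lambda>\<tau>. x / (2 * sqrt (a * \<tau>))) has_real_derivative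
      - (x * (2 * (inverse (sqrt (a * t)) / 2 * a))) / (2 * sqrt (a * t))\<^sup>2) (at t)"
    by (auto intro!: derivative_eq_intros)
  moreover have "- (x * (2 * (inverse (sqrt (a * t)) / 2 * a))) / (2 * sqrt (a * t))\<^sup>2
      = - (x / (2 * sqrt (a * t))) / (2 * t)"
    using assms by (simp add: field_simps power2_eq_square real_sqrt_mult)
  ultimately show ?thesis by simp
qed

lemma has_real_derivative_rescale_iff:
  fixes F G :: "real \<Rightarrow> real"
  assumes W: "W > 0" and K: "K \<noteq> 0" and S: "open S" "x \<in> S"
    and F_eq: "\<And>\<xi>. \<xi> \<in> S \<Longrightarrow> F \<xi> = K * G (\<xi> / W)"
  shows "(F has_real_derivative R) (at x) \<longleftrightarrow> (G has_real_derivative R * W / K) (at (x / W))"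
proof
  assume "(F has_real_derivative R) (at x)"
  then have "(F has_real_derivative R) (at (W * (x / W)))" using W by simp
  from DERIV_chain2[OF this DERIV_cmult_Id[of W "x / W"]]
  have "((\<lambda>z. F (W * z) / K) has_real_derivative R * W / K) (at (x / W))"
    using K by (auto intro!: derivative_eq_intros)
  moreover have "open ((\<lambda>z. W * z) -` S)"
    using S(1) by (rule open_vimage) (auto intro!: continuous_intros)
  ultimately show "(G has_real_derivative R * W / K) (at (x / W))"
    by (rule has_field_derivative_transform_within_open) (use S(2) W K F_eq in auto)
next
  assume "(G has_real_derivative R * W / K) (at (x / W))"
  moreover have "((\<lambda>\<xi>. \<xi> / W) has_real_derivative 1 / W) (at x)"
    using W by (auto intro!: derivative_eq_intros)
  ultimately have "((\<lambda>\<xi>. K * G (\<xi> / W)) has_real_derivative K * (R * W / K * (1 / W))) (at x)"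
    by (intro DERIV_cmult DERIV_chain2)
  then have "((\<lambda>\<xi>. K * G (\<xi> / W)) has_real_derivative R) (at x)"
    using W K by simp
  then show "(F has_real_derivative R) (at x)"
    by (rule has_field_derivative_transform_within_open[OF _ S]) (use F_eq in auto)
qed

lemma all_pos_iff_const:
  assumes "\<And>t::real. t > 0 \<Longrightarrow> P t \<longleftrightarrow> Q"
  shows "(\<forall>t>0. P t) \<longleftrightarrow> Q"
proof
  assume "\<forall>t>0. P t"
  then show Q using assms[of 1] by simp
qed (use assms in auto)

lemma ball_Icc_rescale_iff:
  fixes W :: real
  assumes W: "W > 0"
  shows "(\<forall>x\<in>{0..lam * W}. P x) \<longleftrightarrow> (\<forall>\<eta>\<in>{0..lam}. P (\<eta> * W))"
proof
  assume P: "\<forall>\<eta>\<in>{0..lam}. P (\<eta> * W)"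
  show "\<forall>x\<in>{0..lam * W}. P x"
  proof
    fix x assume "x \<in> {0..lam * W}"
    then have "x / W \<in> {0..lam}" using W by (auto simp: field_simps)
    with P have "P (x / W * W)" ..
    then show "P x" using W by simp
  qed
qed (use W in \<open>auto simp: mult_right_mono\<close>)

lemma ball_Ioo_rescale_iff:
  fixes W :: real
  assumes W: "W > 0"
  shows "(\<forall>x\<in>{0<..<lam * W}. P x) \<longleftrightarrow> (\<forall>\<eta>\<in>{0<..<lam}. P (\<eta> * W))"
proof
  assume P: "\<forall>\<eta>\<in>{0<..<lam}. P (\<eta> * W)"
  show "\<forall>x\<in>{0<..<lam * W}. P x"
  proof
    fix x assume "x \<in> {0<..<lam * W}"
    then have "x / W \<in> {0<..<lam}" using W by (auto simp: field_simps)
    with P have "P (x / W * W)" ..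
    then show "P x" using W by simp
  qed
qed (use W in \<open>auto simp: mult_right_mono\<close>)

locale self_similar_stefan =
  fixes \<rho> c l h0 k0 \<beta> Tf Tinf lam :: real and \<phi> :: "real \<Rightarrow> real"
  assumes rho_pos: "\<rho> > 0" and c_pos: "c > 0" and l_pos: "l > 0" and k0_pos: "k0 > 0"
    and beta_pos: "\<beta> > 0" and Tinf_less_Tf: "Tinf < Tf" and lam_pos: "lam > 0"
begin

definition W :: "real \<Rightarrow> real" where
  "W t = 2 * sqrt (alpha0 k0 \<rho> c * t)"

definition T :: "real \<Rightarrow> real \<Rightarrow> real" where
  "T = (\<lambda>x t. (Tf - Tinf) * \<phi> (x / (2 * sqrt (alpha0 k0 \<rho> c * t))) + Tinf)"

definition s :: "real \<Rightarrow> real" where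
  "s = (\<lambda>t. 2 * lam * sqrt (alpha0 k0 \<rho> c * t))"

abbreviation k :: "real \<Rightarrow> real" where
  "k \<equiv> kcond k0 \<beta> Tf Tinf"

lemma alpha0_pos: "alpha0 k0 \<rho> c > 0"
  using k0_pos rho_pos c_pos by (simp add: alpha0_def)

lemma W_pos: "t > 0 \<Longrightarrow> W t > 0"
  using alpha0_pos by (simp add: W_def)

lemma W_squared: "t > 0 \<Longrightarrow> (W t)\<^sup>2 = 4 * alpha0 k0 \<rho> c * t"
  using alpha0_pos by (simp add: W_def power_mult_distrib)

lemma s_eq: "s t = lam * W t"
  by (simp add: s_def W_def)

lemma T_eq: "T x t = (Tf - Tinf) * \<phi> (x / W t) + Tinf"
  by (simp add: T_def W_def)

lemma k_T_eq: "k (T x t) = k0 * (1 + \<beta> * \<phi> (x / W t))"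
  using Tinf_less_Tf by (simp add: kcond_def T_eq)

lemma k_Tf: "k Tf = k0 * (1 + \<beta>)"
  using Tinf_less_Tf by (simp add: kcond_def)

lemma T_differentiable_iff:
  assumes "t > 0"
  shows "(\<forall>x\<in>{0..s t}. (\<lambda>\<xi>. T \<xi> t) differentiable (at x within {0..s t}))
     \<longleftrightarrow> (\<forall>\<eta>\<in>{0..lam}. \<phi> differentiable (at \<eta> within {0..lam}))"
  using W_pos[OF assms] Tinf_less_Tf
  by (simp add: s_eq T_eq ball_Icc_rescale_iff differentiable_affine_rescale_Icc_iff)

lemma Tx_eq:
  assumes "t > 0" and "x \<in> {0..s t}" and "\<phi> differentiable (at (x / W t) within {0..lam})"
  shows "Tx T s x t = (Tf - Tinf) / W t * dy \<phi> lam (x / W t)"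
  using vector_derivative_affine_rescale_Icc[OF W_pos[OF assms(1)] _ lam_pos, of "Tf - Tinf" x \<phi>]
    assms Tinf_less_Tf
  by (simp add: Tx_def dy_def s_eq T_eq)

lemma T_has_time_derivative:
  assumes t: "t > 0" and x: "x \<in> {0<..<s t}"
    and diff: "\<phi> differentiable (at (x / W t) within {0..lam})"
  shows "((\<lambda>\<tau>. T x \<tau>) has_real_derivative
           (Tf - Tinf) * dy \<phi> lam (x / W t) * (- (x / W t) / (2 * t))) (at t)"
proof -
  have "x / W t \<in> {0<..<lam}"
    using x W_pos[OF t] by (simp add: s_eq field_simps)
  then have "at (x / W t) within {0..lam} = at (x / W t)"
    by (intro at_within_Icc_at) auto
  then have "(\<phi> has_real_derivative dy \<phi> lam (x / W t)) (at (x / (2 * sqrt (alpha0 k0 \<rho> c * t))))"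
    using diff vector_derivative_works has_real_derivative_iff_has_vector_derivative
    unfolding dy_def W_def by metis
  from DERIV_chain2[OF this has_real_derivative_similarity_variable[OF alpha0_pos t]]
  have "((\<lambda>\<tau>. (Tf - Tinf) * \<phi> (x / (2 * sqrt (alpha0 k0 \<rho> c * \<tau>))) + Tinf) has_real_derivative
      (Tf - Tinf) * (dy \<phi> lam (x / W t) * (- (x / W t) / (2 * t))) + 0) (at t)"
    unfolding W_def by (intro DERIV_add DERIV_cmult DERIV_const)
  then show ?thesis
    by (simp add: T_def mult.assoc)
qed

lemma heat_equation_at_iff:
  assumes t: "t > 0" and x: "x \<in> {0<..<s t}"
    and diff: "\<forall>\<eta>\<in>{0..lam}. \<phi> differentiable (at \<eta> within {0..lam})"
  shows "((\<lambda>\<xi>. k (T \<xi> t) * Tx T s \<xi> t) has_real_derivative \<rho> * c * deriv (\<lambda>\<tau>. T x \<tau>) t) (at x)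
     \<longleftrightarrow> ((\<lambda>z. (1 + \<beta> * \<phi> z) * dy \<phi> lam z) has_real_derivative
           - 2 * (x / W t) * dy \<phi> lam (x / W t)) (at (x / W t))"
proof -
  obtain D where D: "Tf - Tinf = D" "D > 0"
    using Tinf_less_Tf by simp
  \<comment> \<open>\<open>Tx\<close> is a derivative within \<open>[0, s t]\<close>, so the flux has the rescaled form only on the open interval.\<close>
  let ?K = "k0 * D / W t"
  have K: "?K \<noteq> 0"
    using k0_pos D W_pos[OF t] by simp
  have flux_eq: "k (T \<xi> t) * Tx T s \<xi> t = ?K * ((1 + \<beta> * \<phi> (\<xi> / W t)) * dy \<phi> lam (\<xi> / W t))"
    if "\<xi> \<in> {0<..<s t}" for \<xi>
  proof -
    have "\<xi> / W t \<in> {0..lam}"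
      using that W_pos[OF t] by (simp add: s_eq field_simps)
    then show ?thesis
      using that diff by (simp add: Tx_eq[OF t] k_T_eq D)
  qed
  have "x / W t \<in> {0..lam}"
    using x W_pos[OF t] by (simp add: s_eq field_simps)
  then have "deriv (\<lambda>\<tau>. T x \<tau>) t = D * dy \<phi> lam (x / W t) * (- (x / W t) / (2 * t))"
    using DERIV_imp_deriv[OF T_has_time_derivative[OF t x]] diff D by simp
  then have "\<rho> * c * deriv (\<lambda>\<tau>. T x \<tau>) t * W t / ?K
      = - \<rho> * c * (W t)\<^sup>2 / (2 * t * k0) * (x / W t) * dy \<phi> lam (x / W t)"
    using W_pos[OF t] D k0_pos t by (simp add: field_simps power2_eq_square)
  also have "\<dots> = - 2 * (x / W t) * dy \<phi> lam (x / W t)"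
    using t rho_pos c_pos k0_pos by (simp add: W_squared alpha0_def)
  finally show ?thesis
    using has_real_derivative_rescale_iff[where G = "\<lambda>z. (1 + \<beta> * \<phi> z) * dy \<phi> lam z",
        OF W_pos[OF t] K open_greaterThanLessThan x flux_eq]
    by simp
qed

lemma heat_equation_iff:
  assumes t: "t > 0"
    and diff: "\<forall>\<eta>\<in>{0..lam}. \<phi> differentiable (at \<eta> within {0..lam})"
  shows "(\<forall>x\<in>{0<..<s t}. (\<lambda>\<tau>. T x \<tau>) differentiable (at t) \<and>
            ((\<lambda>\<xi>. k (T \<xi> t) * Tx T s \<xi> t) has_real_derivative \<rho> * c * deriv (\<lambda>\<tau>. T x \<tau>) t) (at x))
     \<longleftrightarrow> (\<forall>\<eta>\<in>{0<..<lam}. ((\<lambda>z. (1 + \<beta> * \<phi> z) * dy \<phi> lam z) has_real_derivative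
            - 2 * \<eta> * dy \<phi> lam \<eta>) (at \<eta>))"
    (is "(\<forall>x\<in>_. ?heat x) \<longleftrightarrow> (\<forall>\<eta>\<in>_. ?ode \<eta>)")
proof -
  have "?heat x \<longleftrightarrow> ?ode (x / W t)" if x: "x \<in> {0<..<s t}" for x
  proof -
    have "x / W t \<in> {0..lam}"
      using x W_pos[OF t] by (simp add: s_eq field_simps)
    then have "(\<lambda>\<tau>. T x \<tau>) differentiable (at t)"
      using T_has_time_derivative[OF t x] diff real_differentiable_def by blast
    then show ?thesis
      using heat_equation_at_iff[OF t x diff] by simp
  qed
  then have "(\<forall>x\<in>{0<..<s t}. ?heat x) \<longleftrightarrow> (\<forall>x\<in>{0<..<lam * W t}. ?ode (x / W t))"
    by (simp add: s_eq)
  also have "\<dots> \<longleftrightarrow> (\<forall>\<eta>\<in>{0<..<lam}. ?ode \<eta>)"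
    using W_pos[OF t] ball_Ioo_rescale_iff[OF W_pos[OF t], of lam "\<lambda>x. ?ode (x / W t)"] by simp
  finally show ?thesis .
qed

lemma free_boundary_temperature_iff:
  assumes "t > 0"
  shows "T (s t) t = Tf \<longleftrightarrow> \<phi> lam = 1"
proof -
  have "T (s t) t - Tf = (Tf - Tinf) * (\<phi> lam - 1)"
    using W_pos[OF assms] by (simp add: T_eq s_eq algebra_simps)
  then show ?thesis
    using Tinf_less_Tf by (metis diff_gt_0_iff_gt eq_iff_diff_eq_0 mult_eq_0_iff order_less_irrefl)
qed

lemma s_has_derivative:
  assumes "t > 0"
  shows "(s has_real_derivative lam * alpha0 k0 \<rho> c / sqrt (alpha0 k0 \<rho> c * t)) (at t)"
proof -
  have "alpha0 k0 \<rho> c * t > 0"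
    using alpha0_pos assms by simp
  then have "(s has_real_derivative 2 * lam * (inverse (sqrt (alpha0 k0 \<rho> c * t)) / 2 * alpha0 k0 \<rho> c)) (at t)"
    unfolding s_def by (auto intro!: derivative_eq_intros)
  then show ?thesis
    by (simp add: field_simps)
qed

lemma stefan_condition_iff:
  assumes t: "t > 0"
    and diff: "\<forall>\<eta>\<in>{0..lam}. \<phi> differentiable (at \<eta> within {0..lam})"
  shows "k Tf * Tx T s (s t) t = \<rho> * l * deriv s t
     \<longleftrightarrow> dy \<phi> lam lam / lam = 2 / ((1 + \<beta>) * Ste_inf c Tf Tinf l)"
proof -
  obtain D where D: "Tf - Tinf = D" "D > 0"
    using Tinf_less_Tf by simp
  define q where "q = sqrt (alpha0 k0 \<rho> c * t)"
  have q: "q > 0" and W: "W t = 2 * q"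
    using alpha0_pos t by (simp_all add: q_def W_def)
  have "s t \<in> {0..s t}" and "s t / W t = lam"
    using W_pos[OF t] lam_pos by (simp_all add: s_eq)
  then have Txs: "Tx T s (s t) t = D / W t * dy \<phi> lam lam"
    using Tx_eq[OF t] diff lam_pos D by simp
  have ds: "deriv s t = lam * (k0 / (\<rho> * c)) / q"
    using DERIV_imp_deriv[OF s_has_derivative[OF t]] by (simp add: q_def alpha0_def)
  have Ste: "Ste_inf c Tf Tinf l = c * D / l"
    using D by (simp add: Ste_inf_def)
  have lhs: "k0 * (1 + \<beta>) * (D / W t * dy \<phi> lam lam) = k0 * ((1 + \<beta>) * D * c * dy \<phi> lam lam) / (2 * q * c)"
    and rhs: "\<rho> * l * (lam * (k0 / (\<rho> * c)) / q) = k0 * (2 * l * lam) / (2 * q * c)"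
    using q rho_pos c_pos by (simp_all add: W field_simps)
  then have "k0 * (1 + \<beta>) * (D / W t * dy \<phi> lam lam) = \<rho> * l * (lam * (k0 / (\<rho> * c)) / q)
      \<longleftrightarrow> k0 * ((1 + \<beta>) * D * c * dy \<phi> lam lam) = k0 * (2 * l * lam)"
    unfolding lhs rhs divide_cancel_right using q c_pos by simp
  also have "\<dots> \<longleftrightarrow> (1 + \<beta>) * D * c * dy \<phi> lam lam = 2 * l * lam"
    by (rule mult_left_cancel) (use k0_pos in simp)
  also have "\<dots> \<longleftrightarrow> dy \<phi> lam lam / lam = 2 / ((1 + \<beta>) * (c * D / l))"
  proof -
    have "(1 + \<beta>) * D * c > 0"
      using D(2) c_pos beta_pos by simp
    then show ?thesis
      using l_pos lam_pos by (simp add: field_simps)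
  qed
  finally show ?thesis
    unfolding k_Tf Txs ds Ste .
qed

lemma convective_condition_iff:
  assumes t: "t > 0"
    and diff: "\<forall>\<eta>\<in>{0..lam}. \<phi> differentiable (at \<eta> within {0..lam})"
  shows "k (T 0 t) * Tx T s 0 t = h0 / sqrt t * (T 0 t - Tinf)
     \<longleftrightarrow> dy \<phi> lam 0 + \<beta> * \<phi> 0 * dy \<phi> lam 0 - 2 * Biot h0 k0 \<rho> c * \<phi> 0 = 0"
proof -
  obtain D where D: "Tf - Tinf = D" "D > 0"
    using Tinf_less_Tf by simp
  have W: "W t = 2 * sqrt (alpha0 k0 \<rho> c) * sqrt t"
    by (simp add: W_def real_sqrt_mult)
  have Tx0: "Tx T s 0 t = D / W t * dy \<phi> lam 0"
    using Tx_eq[OF t] diff lam_pos D W_pos[OF t] by (simp add: s_eq)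
  have T0: "T 0 t - Tinf = D * \<phi> 0"
    using D by (simp add: T_eq)
  have lhs: "k0 * (1 + \<beta> * \<phi> 0) * (D / W t * dy \<phi> lam 0) = D * (k0 * (1 + \<beta> * \<phi> 0) * dy \<phi> lam 0) / W t"
    and rhs: "h0 / sqrt t * (D * \<phi> 0) = D * (2 * h0 * sqrt (alpha0 k0 \<rho> c) * \<phi> 0) / W t"
    using t alpha0_pos by (simp_all add: W field_simps)
  then have "k0 * (1 + \<beta> * \<phi> 0) * (D / W t * dy \<phi> lam 0) = h0 / sqrt t * (D * \<phi> 0)
      \<longleftrightarrow> D * (k0 * (1 + \<beta> * \<phi> 0) * dy \<phi> lam 0) = D * (2 * h0 * sqrt (alpha0 k0 \<rho> c) * \<phi> 0)"
    unfolding lhs rhs divide_cancel_right using W_pos[OF t] by simp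
  also have "\<dots> \<longleftrightarrow> k0 * (1 + \<beta> * \<phi> 0) * dy \<phi> lam 0 = 2 * h0 * sqrt (alpha0 k0 \<rho> c) * \<phi> 0"
    by (rule mult_left_cancel) (use D(2) in simp)
  also have "\<dots> \<longleftrightarrow> dy \<phi> lam 0 + \<beta> * \<phi> 0 * dy \<phi> lam 0 - 2 * Biot h0 k0 \<rho> c * \<phi> 0 = 0"
    using k0_pos by (simp add: Biot_def field_simps)
  finally show ?thesis
    unfolding k_T_eq Tx0 T0 by simp
qed

lemma stefan_solution_iff:
  "stefan_solution \<rho> c l h0 k Tf Tinf T s
   \<longleftrightarrow> ode_problem \<beta> (2 * Biot h0 k0 \<rho> c) \<phi> lam \<and>
       dy \<phi> lam lam / lam = 2 / ((1 + \<beta>) * Ste_inf c Tf Tinf l)"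
proof -
  let ?diff = "\<forall>\<eta>\<in>{0..lam}. \<phi> differentiable (at \<eta> within {0..lam})"
  have s: "s 0 = 0" "\<forall>t>0. s differentiable (at t)"
    using s_has_derivative real_differentiable_def by (auto simp: s_def)
  have diff_iff: "(\<forall>t>0. \<forall>x\<in>{0..s t}. (\<lambda>\<xi>. T \<xi> t) differentiable (at x within {0..s t})) \<longleftrightarrow> ?diff"
    by (intro all_pos_iff_const T_differentiable_iff)
  have boundary_iff: "(\<forall>t>0. T (s t) t = Tf) \<longleftrightarrow> \<phi> lam = 1"
    by (intro all_pos_iff_const free_boundary_temperature_iff)
  show ?thesis
  proof (cases ?diff)
    case True
    have "(\<forall>t>0. \<forall>x\<in>{0<..<s t}. (\<lambda>\<tau>. T x \<tau>) differentiable (at t) \<and>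
            ((\<lambda>\<xi>. k (T \<xi> t) * Tx T s \<xi> t) has_real_derivative \<rho> * c * deriv (\<lambda>\<tau>. T x \<tau>) t) (at x))
       \<longleftrightarrow> (\<forall>\<eta>\<in>{0<..<lam}. ((\<lambda>z. (1 + \<beta> * \<phi> z) * dy \<phi> lam z) has_real_derivative
            - 2 * \<eta> * dy \<phi> lam \<eta>) (at \<eta>))"
      by (intro all_pos_iff_const heat_equation_iff True)
    moreover have "(\<forall>t>0. k Tf * Tx T s (s t) t = \<rho> * l * deriv s t)
       \<longleftrightarrow> dy \<phi> lam lam / lam = 2 / ((1 + \<beta>) * Ste_inf c Tf Tinf l)"
      by (intro all_pos_iff_const stefan_condition_iff True)
    moreover have "(\<forall>t>0. k (T 0 t) * Tx T s 0 t = h0 / sqrt t * (T 0 t - Tinf))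
       \<longleftrightarrow> dy \<phi> lam 0 + \<beta> * \<phi> 0 * dy \<phi> lam 0 - 2 * Biot h0 k0 \<rho> c * \<phi> 0 = 0"
      by (intro all_pos_iff_const convective_condition_iff True)
    ultimately show ?thesis
      using s diff_iff boundary_iff True unfolding stefan_solution_def ode_problem_def by blast
  next
    case False
    then show ?thesis
      using diff_iff unfolding stefan_solution_def ode_problem_def by blast
  qed
qed

end

theorem theorem2p1:
  fixes \<rho> c l h0 k0 \<beta> Tf Tinf lam :: real and \<phi> :: "real \<Rightarrow> real"
  assumes "\<rho> > 0" "c > 0" "l > 0" "h0 > 0" "k0 > 0" "\<beta> > 0" "Tinf < Tf" "lam > 0"
  shows "stefan_solution \<rho> c l h0 (kcond k0 \<beta> Tf Tinf) Tf Tinf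
           (\<lambda>x t. (Tf - Tinf) * \<phi> (x / (2 * sqrt (alpha0 k0 \<rho> c * t))) + Tinf)
           (\<lambda>t. 2 * lam * sqrt (alpha0 k0 \<rho> c * t))
         \<longleftrightarrow>
         ode_problem \<beta> (2 * Biot h0 k0 \<rho> c) \<phi> lam \<and>
         dy \<phi> lam lam / lam = 2 / ((1 + \<beta>) * Ste_inf c Tf Tinf l)"
proof -
  interpret self_similar_stefan \<rho> c l h0 k0 \<beta> Tf Tinf lam \<phi>
    using assms by unfold_locales
  show ?thesis
    using stefan_solution_iff unfolding T_def s_def .
qed

end
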